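(* If an acyclic VCCR $f$ satisfies Positive Involvement in Defeat and Majority Defeat, then the VSCC $\overline f$ satisfies Tolerant Positive Involvement. In particular, the Split Cycle VSCC $\overline{sc}$ and the Weighted Covering VSCC $\overline{wc}$ satisfy Tolerant Positive Involvement, since $sc$ and $wc$ both satisfy Positive Involvement in Defeat and Majority Defeat.
   Context: Profiles: $\mathbf P:V\to\mathcal L(X)$, $V$ nonempty finite set of voters, $X=X(\mathbf P)$ nonempty finite set of candidates, $\mathcal L(X)$ strict linear orders. $\mathrm{Margin}_{\mathbf P}(x,y)$ = #voters ranking $x$ above $y$ minus #ranking $y$ above $x$; $x$ majority preferred to $y$ if $>0$. A majority path: sequence of candidates with positive consecutive margins; strength = minimum of those margins. A VCCR $f$ assigns to each profile an asymmetric relation $f(\mathbf P)$ on $X(\mathbf P)$; it is acyclic if every $f(\mathbf P)$ has no cycle. $\overline f(\mathbf P)=\{x: \text{no } y \text{ with } (y,x)\in f(\mathbf P)\}$ (a VSCC when $f$ is acyclic). $sc$: $(x,y)\in sc(\mathbf P)$ iff $\mathrm{Margin}_{\mathbf P}(x,y)>0$ exceeds the strength of every majority path from $y$ to $x$. $wc$: $(x,y)\in wc(\mathbf P)$ iff $\mathrm{Margin}_{\mathbf P}(x,y)>0$ and $\mathrm{Margin}_{\mathbf P}(x,z)\ge\mathrm{Margin}_{\mathbf P}(y,z)$ for all $z$. Positive Involvement in Defeat: if $(x,y)\notin f(\mathbf P)$ and $\mathbf P'$ adds one new voter ranking $y$ above $x$, then $(x,y)\notin f(\mathbf P')$. Majority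 Defeat: $(x,y)\in f(\mathbf P)$ implies $\mathrm{Margin}_{\mathbf P}(x,y)>0$. A VSCC $F$ satisfies Tolerant Positive Involvement if whenever $x\in F(\mathbf P)$ and $\mathbf P'$ is obtained by adding one new voter who ranks $x$ above every other candidate $y$ such that $x$ is not majority preferred to $y$ in $\mathbf P$, then $x\in F(\mathbf P')$. *)

theory Defs
  imports Main
begin

text \<open>A profile is represented by a set of voters V, a set of candidates X and a ballot
  function P assigning to each voter a strict linear order (x,y) \<in> P i meaning
  "voter i ranks x above y". Voters outside V get the empty ballot, so that the
  profile is determined by its restriction to V.\<close>

definition lin_order_on :: "'c set \<Rightarrow> 'c rel \<Rightarrow> bool" where
  "lin_order_on X L \<longleftrightarrow> strict_linear_order_on X L \<and> L \<subseteq> X \<times> X"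

definition profile :: "'v set \<Rightarrow> 'c set \<Rightarrow> ('v \<Rightarrow> 'c rel) \<Rightarrow> bool" where
  "profile V X P \<longleftrightarrow> finite V \<and> V \<noteq> {} \<and> finite X \<and> X \<noteq> {}
     \<and> (\<forall>i\<in>V. lin_order_on X (P i)) \<and> (\<forall>i. i \<notin> V \<longrightarrow> P i = {})"

definition margin :: "'v set \<Rightarrow> ('v \<Rightarrow> 'c rel) \<Rightarrow> 'c \<Rightarrow> 'c \<Rightarrow> int" where
  "margin V P x y = int (card {i\<in>V. (x,y) \<in> P i}) - int (card {i\<in>V. (y,x) \<in> P i})"

type_synonym ('v,'c) vccr = "'v set \<Rightarrow> 'c set \<Rightarrow> ('v \<Rightarrow> 'c rel) \<Rightarrow> 'c rel"
type_synonym ('v,'c) vscc = "'v set \<Rightarrow> 'c set \<Rightarrow> ('v \<Rightarrow> 'c rel) \<Rightarrow> 'c set"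

definition is_vccr :: "('v,'c) vccr \<Rightarrow> bool" where
  "is_vccr f \<longleftrightarrow> (\<forall>V X P. profile V X P \<longrightarrow> f V X P \<subseteq> X \<times> X \<and> asym (f V X P))"

definition acyclic_vccr :: "('v,'c) vccr \<Rightarrow> bool" where
  "acyclic_vccr f \<longleftrightarrow> (\<forall>V X P. profile V X P \<longrightarrow> acyclic (f V X P))"

definition undefeated :: "('v,'c) vccr \<Rightarrow> ('v,'c) vscc" where
  "undefeated f V X P = {x\<in>X. \<not> (\<exists>y. (y,x) \<in> f V X P)}"

definition positive_involvement_in_defeat :: "('v,'c) vccr \<Rightarrow> bool" where
  "positive_involvement_in_defeat f \<longleftrightarrow>
     (\<forall>V X P i L x y. profile V X P \<and> i \<notin> V \<and> lin_order_on X L \<and> x \<in> X \<and> y \<in> X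
        \<and> (x,y) \<notin> f V X P \<and> (y,x) \<in> L
        \<longrightarrow> (x,y) \<notin> f (insert i V) X (P(i := L)))"

definition majority_defeat :: "('v,'c) vccr \<Rightarrow> bool" where
  "majority_defeat f \<longleftrightarrow>
     (\<forall>V X P x y. profile V X P \<and> (x,y) \<in> f V X P \<longrightarrow> margin V P x y > 0)"

definition tolerant_positive_involvement :: "('v,'c) vscc \<Rightarrow> bool" where
  "tolerant_positive_involvement F \<longleftrightarrow>
     (\<forall>V X P i L x. profile V X P \<and> i \<notin> V \<and> lin_order_on X L \<and> x \<in> F V X P
        \<and> (\<forall>y\<in>X. y \<noteq> x \<and> \<not> margin V P x y > 0 \<longrightarrow> (x,y) \<in> L)
        \<longrightarrow> x \<in> F (insert i V) X (P(i := L)))"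

definition majority_path :: "'v set \<Rightarrow> 'c set \<Rightarrow> ('v \<Rightarrow> 'c rel) \<Rightarrow> 'c list \<Rightarrow> bool" where
  "majority_path V X P xs \<longleftrightarrow> length xs \<ge> 2 \<and> distinct xs \<and> set xs \<subseteq> X
     \<and> (\<forall>k. k + 1 < length xs \<longrightarrow> margin V P (xs ! k) (xs ! (k+1)) > 0)"

definition path_strength :: "'v set \<Rightarrow> ('v \<Rightarrow> 'c rel) \<Rightarrow> 'c list \<Rightarrow> int" where
  "path_strength V P xs = Min {margin V P (xs ! k) (xs ! (k+1)) | k. k + 1 < length xs}"

definition split_cycle :: "('v,'c) vccr" where
  "split_cycle V X P = {(x,y). x \<in> X \<and> y \<in> X \<and> margin V P x y > 0
     \<and> (\<forall>xs. majority_path V X P xs \<and> hd xs = y \<and> last xs = x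
            \<longrightarrow> margin V P x y > path_strength V P xs)}"

definition weighted_covering :: "('v,'c) vccr" where
  "weighted_covering V X P = {(x,y). x \<in> X \<and> y \<in> X \<and> margin V P x y > 0
     \<and> (\<forall>z\<in>X. margin V P x z \<ge> margin V P y z)}"

end

theory Submission
  imports Defs
begin

text \<open>Suppose x is undefeated and a new voter ranks x above every y to
  which x is not majority preferred. If some y defeated x afterwards, then
  either the new voter ranks x above y, and Positive Involvement in Defeat forbids
  the new defeat, or x was majority preferred to y; one voter changes a margin by
  at most one, so y is still not majority preferred to x, contradicting Majority
  Defeat. Split Cycle and Weighted Covering satisfy both axioms because a voter ranking
  y above x lowers the margin of x over y by one while lowering
  no competing margin by more.\<close>

lemma lin_order_on_asym: "lin_order_on X L \<Longrightarrow> (a, b) \<in> L \<Longrightarrow> (b, a) \<notin> L"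
  unfolding lin_order_on_def strict_linear_order_on_def by (meson irrefl_def transD)

lemma lin_order_on_trans: "lin_order_on X L \<Longrightarrow> (a, b) \<in> L \<Longrightarrow> (b, c) \<in> L \<Longrightarrow> (a, c) \<in> L"
  unfolding lin_order_on_def strict_linear_order_on_def by (meson transD)

lemma profile_insert_voter:
  "profile V X P \<Longrightarrow> i \<notin> V \<Longrightarrow> lin_order_on X L \<Longrightarrow> profile (insert i V) X (P(i := L))"
  by (auto simp: profile_def)

lemma margin_antisym: "margin V P a b = - margin V P b a"
  unfolding margin_def by simp

lemma margin_pos_imp_mem:
  assumes "profile V X P" and "margin V P a b > 0"
  shows "a \<in> X" and "b \<in> X"
proof -
  have "{i \<in> V. (a, b) \<in> P i} \<noteq> {}"
    using assms(2) unfolding margin_def by (metis card.empty of_nat_0 diff_gt_0_iff_gt of_nat_less_0_iff)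
  then obtain i where "i \<in> V" and "(a, b) \<in> P i" by blast
  with assms(1) show "a \<in> X" and "b \<in> X" unfolding profile_def lin_order_on_def by auto
qed

lemma margin_insert_voter:
  assumes "finite V" and "i \<notin> V"
  shows "margin (insert i V) (P(i := L)) a b
           = margin V P a b + (if (a, b) \<in> L then 1 else 0) - (if (b, a) \<in> L then 1 else 0)"
proof -
  have count: "card {j \<in> insert i V. (c, d) \<in> (P(i := L)) j}
                 = card {j \<in> V. (c, d) \<in> P j} + (if (c, d) \<in> L then 1 else 0)" for c d
  proof -
    have "{j \<in> insert i V. (c, d) \<in> (P(i := L)) j}
            = (if (c, d) \<in> L then insert i {j \<in> V. (c, d) \<in> P j} else {j \<in> V. (c, d) \<in> P j})"
      using assms(2) by auto
    then show ?thesis using assms by simp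
  qed
  show ?thesis unfolding margin_def count by simp
qed

lemma margin_insert_voter_ge:
  assumes "profile V X P" and "i \<notin> V" and "lin_order_on X L"
  shows "margin (insert i V) (P(i := L)) a b \<ge> margin V P a b - 1"
  using assms margin_insert_voter[of V i P L a b] lin_order_on_asym[of X L a b]
  by (auto simp: profile_def)

lemma margin_insert_voter_below:
  assumes "profile V X P" and "i \<notin> V" and "lin_order_on X L" and "(b, a) \<in> L"
  shows "margin (insert i V) (P(i := L)) a b = margin V P a b - 1"
  using assms margin_insert_voter[of V i P L a b] lin_order_on_asym[of X L b a]
  by (auto simp: profile_def)

lemma margin_insert_voter_gain_mono:
  assumes "profile V X P" and "i \<notin> V" and "lin_order_on X L" and "(y, x) \<in> L"
  shows "margin (insert i V) (P(i := L)) x z - margin V P x z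
           \<le> margin (insert i V) (P(i := L)) y z - margin V P y z"
proof -
  have fin: "finite V" using assms(1) unfolding profile_def by simp
  have "(x, z) \<in> L \<Longrightarrow> (y, z) \<in> L" and "(z, y) \<in> L \<Longrightarrow> (z, x) \<in> L"
    using lin_order_on_trans[OF assms(3)] assms(4) by blast+
  then show ?thesis
    unfolding margin_insert_voter[OF fin assms(2)]
    using lin_order_on_asym[OF assms(3), of x z] lin_order_on_asym[OF assms(3), of y z] by auto
qed

theorem tolerant_positive_involvement_undefeated:
  assumes pid: "positive_involvement_in_defeat f" and md: "majority_defeat f"
  shows "tolerant_positive_involvement (undefeated f)"
  unfolding tolerant_positive_involvement_def
proof (intro allI impI, elim conjE)
  fix V X P i L x
  assume prof: "profile V X P" and i: "i \<notin> V" and L: "lin_order_on X L"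
    and undef: "x \<in> undefeated f V X P"
    and tolerant: "\<forall>y\<in>X. y \<noteq> x \<and> \<not> margin V P x y > 0 \<longrightarrow> (x, y) \<in> L"
  have x: "x \<in> X" and not_defeated: "(y, x) \<notin> f V X P" for y
    using undef unfolding undefeated_def by auto
  have prof': "profile (insert i V) X (P(i := L))"
    using profile_insert_voter[OF prof i L] .
  have "(y, x) \<notin> f (insert i V) X (P(i := L))" for y
  proof
    assume defeat: "(y, x) \<in> f (insert i V) X (P(i := L))"
    then have pos: "margin (insert i V) (P(i := L)) y x > 0"
      using md prof' unfolding majority_defeat_def by blast
    then have y: "y \<in> X" using margin_pos_imp_mem(1)[OF prof'] by blast
    have "y \<noteq> x"
      using pos margin_antisym[of "insert i V" "P(i := L)" x x] by auto
    show False
    proof (cases "(x, y) \<in> L")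
      case True
      then show False
        using pid prof i L x y not_defeated defeat unfolding positive_involvement_in_defeat_def by blast
    next
      case False
      with tolerant y \<open>y \<noteq> x\<close> have "margin V P x y > 0" by blast
      then show False
        using pos margin_insert_voter_ge[OF prof i L, of x y]
          margin_antisym[of "insert i V" "P(i := L)" y x] by linarith
    qed
  qed
  with x show "x \<in> undefeated f (insert i V) X (P(i := L))"
    unfolding undefeated_def by blast
qed

lemma majority_defeat_split_cycle: "majority_defeat split_cycle"
  unfolding majority_defeat_def split_cycle_def by blast

lemma majority_defeat_weighted_covering: "majority_defeat weighted_covering"
  unfolding majority_defeat_def weighted_covering_def by blast

lemma le_path_strength_iff:
  assumes "length xs \<ge> 2"
  shows "c \<le> path_strength V P xs \<longleftrightarrow> (\<forall>k. k + 1 < length xs \<longrightarrow> c \<le> margin V P (xs ! k) (xs ! (k + 1)))"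
proof -
  have edges: "{margin V P (xs ! k) (xs ! (k + 1)) | k. k + 1 < length xs}
                 = (\<lambda>k. margin V P (xs ! k) (xs ! (k + 1))) ` {k. k + 1 < length xs}"
    by blast
  have "finite {k. k + 1 < length xs}"
    by (rule finite_subset[of _ "{..<length xs}"]) auto
  moreover have "0 \<in> {k. k + 1 < length xs}"
    using assms by simp
  ultimately show ?thesis
    unfolding path_strength_def edges by (subst Min_ge_iff) auto
qed

lemma positive_involvement_in_defeat_split_cycle: "positive_involvement_in_defeat split_cycle"
  unfolding positive_involvement_in_defeat_def
proof (intro allI impI, elim conjE)
  fix V X P i L x y
  assume prof: "profile V X P" and i: "i \<notin> V" and L: "lin_order_on X L"
    and x: "x \<in> X" and y: "y \<in> X" and not_sc: "(x, y) \<notin> split_cycle V X P" and yx: "(y, x) \<in> L"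
  let ?m' = "margin (insert i V) (P(i := L))"
  have drop: "?m' x y = margin V P x y - 1"
    using margin_insert_voter_below[OF prof i L yx] .
  show "(x, y) \<notin> split_cycle (insert i V) X (P(i := L))"
  proof (cases "?m' x y > 0")
    case False
    then show ?thesis unfolding split_cycle_def by simp
  next
    case True
    with not_sc x y drop obtain xs where path: "majority_path V X P xs" and "hd xs = y" "last xs = x"
      and strong: "margin V P x y \<le> path_strength V P xs"
      unfolding split_cycle_def by (auto simp: not_less)
    have len: "length xs \<ge> 2" using path unfolding majority_path_def by simp
    have edges: "?m' x y \<le> ?m' (xs ! k) (xs ! (k + 1))" if "k + 1 < length xs" for k
    proof -
      have "margin V P x y \<le> margin V P (xs ! k) (xs ! (k + 1))"
        using that strong le_path_strength_iff[OF len] by blast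
      then show ?thesis
        using drop margin_insert_voter_ge[OF prof i L, of "xs ! k" "xs ! (k + 1)"] by linarith
    qed
    then have "majority_path (insert i V) X (P(i := L)) xs"
      using path True unfolding majority_path_def by (auto intro: less_le_trans)
    moreover have "?m' x y \<le> path_strength (insert i V) (P(i := L)) xs"
      using edges le_path_strength_iff[OF len] by blast
    ultimately show ?thesis
      using \<open>hd xs = y\<close> \<open>last xs = x\<close> unfolding split_cycle_def by (auto simp: not_less)
  qed
qed

lemma positive_involvement_in_defeat_weighted_covering:
  "positive_involvement_in_defeat weighted_covering"
  unfolding positive_involvement_in_defeat_def
proof (intro allI impI, elim conjE)
  fix V X P i L x y
  assume prof: "profile V X P" and i: "i \<notin> V" and L: "lin_order_on X L"
    and x: "x \<in> X" and y: "y \<in> X" and not_wc: "(x, y) \<notin> weighted_covering V X P"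
    and yx: "(y, x) \<in> L"
  let ?m' = "margin (insert i V) (P(i := L))"
  show "(x, y) \<notin> weighted_covering (insert i V) X (P(i := L))"
  proof (cases "margin V P x y > 0")
    case False
    then show ?thesis
      using margin_insert_voter_below[OF prof i L yx] unfolding weighted_covering_def by auto
  next
    case True
    with not_wc x y obtain z where "z \<in> X" and "margin V P x z < margin V P y z"
      unfolding weighted_covering_def by (auto simp: not_le)
    then have "?m' x z < ?m' y z"
      using margin_insert_voter_gain_mono[OF prof i L yx, of z] by linarith
    with \<open>z \<in> X\<close> show ?thesis unfolding weighted_covering_def by (auto simp: not_le)
  qed
qed

theorem proposition5p12:
  shows "(\<forall>f :: ('v,'c) vccr. is_vccr f \<and> acyclic_vccr f
            \<and> positive_involvement_in_defeat f \<and> majority_defeat f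
            \<longrightarrow> tolerant_positive_involvement (undefeated f))
         \<and> tolerant_positive_involvement (undefeated (split_cycle :: ('v,'c) vccr))
         \<and> tolerant_positive_involvement (undefeated (weighted_covering :: ('v,'c) vccr))"
  using tolerant_positive_involvement_undefeated
    positive_involvement_in_defeat_split_cycle majority_defeat_split_cycle
    positive_involvement_in_defeat_weighted_covering majority_defeat_weighted_covering
  by blast

end
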